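(* Let $X$ be a paracompact topologically complete space and let $\mathcal A$ be a cofinal subfamily of the family of all closed, locally finite, normal covers of $X$ (i.e. every closed, locally finite, normal cover of $X$ is refined by some member of $\mathcal A$). With $\Lambda$, $N_\lambda\subset F_\lambda$ and $\pi^\mu_\lambda$ as in the context, for each $\lambda\in\Lambda$ there exists $\mu\in\Lambda$ with $\mu\supseteq\lambda$ such that $\pi^\mu_\lambda(F_\mu)\subset N_\lambda$. In particular, the system of inclusions $(N_\lambda\hookrightarrow F_\lambda;\lambda\in\Lambda)$ is an isomorphism in the category pro-Top between the inverse systems $(N_\lambda,\pi^\mu_\lambda;\Lambda)$ and $(F_\lambda,\pi^\mu_\lambda;\Lambda)$.
   Context: A topologically complete space is a Tychonoff space complete with respect to its finest uniformity. A closed, locally finite, normal cover $\alpha$ of $X$ is a locally finite cover by closed sets admitting a partition of unity $\{\phi_{\alpha,V}:V\in\alpha\}$ with $\mathrm{cl}(\phi_{\alpha,V}^{-1}((0,1]))\subset\mathrm{int}(V)$, $\sum_V\phi_{\alpha,V}=1$. Construction: $\Lambda$ is the set of finite subsets of $\mathcal A$ directed by inclusion. For $\lambda\in\Lambda$, $N^{(0)}_\lambda$ is the set of functions $v$ on $\lambda$ with $v(\alpha)\in\alpha$ for all $\alpha\in\lambda$ and $\wedge v:=\bigcap_{\alpha\in\lambda}v(\alpha)\neq\emptyset$ (empty intersection meaning $X$). $F_\lambda$ is the simplicial complex (weak topology) with vertex set $N^{(0)}_\lambda$ in which $\{v_1,\dots,v_k\}$ spans a simplex iff $\wedge v_i\cap\wedge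 v_j\neq\emptyset$ for all $i,j$; $N_\lambda$ is its subcomplex with the same vertices in which $\{v_1,\dots,v_k\}$ spans a simplex iff $\bigcap_i\wedge v_i\neq\emptyset$. For $\lambda\subset\mu$, $\pi^\mu_\lambda:F_\mu\to F_\lambda$ is the simplicial map sending each vertex $v$ to its restriction $v|_\lambda$; it maps $N_\mu$ into $N_\lambda$. *)

theory Defs
  imports "HOL-Analysis.Analysis"
begin

definition tychonoff_space :: "'a topology \<Rightarrow> bool" where
  "tychonoff_space X \<longleftrightarrow> t1_space X \<and> completely_regular_space X"

definition refines_cover :: "'a set set \<Rightarrow> 'a set set \<Rightarrow> bool" where
  "refines_cover \<beta> \<alpha> \<longleftrightarrow> (\<forall>B\<in>\<beta>. \<exists>A\<in>\<alpha>. B \<subseteq> A)"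

definition paracompact_space :: "'a topology \<Rightarrow> bool" where
  "paracompact_space X \<longleftrightarrow> Hausdorff_space X \<and>
     (\<forall>\<U>. (\<forall>U\<in>\<U>. openin X U) \<and> \<Union>\<U> = topspace X \<longrightarrow>
        (\<exists>\<V>. (\<forall>V\<in>\<V>. openin X V) \<and> \<Union>\<V> = topspace X \<and>
              locally_finite_in X \<V> \<and> refines_cover \<V> \<U>))"

definition uniformity_on :: "'a set \<Rightarrow> ('a \<times> 'a) set set \<Rightarrow> bool" where
  "uniformity_on S \<U> \<longleftrightarrow>
     \<U> \<noteq> {} \<and>
     (\<forall>U\<in>\<U>. Id_on S \<subseteq> U \<and> U \<subseteq> S \<times> S) \<and>
     (\<forall>U V. U \<in> \<U> \<and> U \<subseteq> V \<and> V \<subseteq> S \<times> S \<longrightarrow> V \<in> \<U>) \<and>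
     (\<forall>U\<in>\<U>. \<forall>V\<in>\<U>. U \<inter> V \<in> \<U>) \<and>
     (\<forall>U\<in>\<U>. U\<inverse> \<in> \<U>) \<and>
     (\<forall>U\<in>\<U>. \<exists>V\<in>\<U>. V O V \<subseteq> U)"

definition compatible_uniformity :: "'a topology \<Rightarrow> ('a \<times> 'a) set set \<Rightarrow> bool" where
  "compatible_uniformity X \<U> \<longleftrightarrow>
     uniformity_on (topspace X) \<U> \<and>
     (\<forall>A. openin X A \<longleftrightarrow> A \<subseteq> topspace X \<and> (\<forall>x\<in>A. \<exists>U\<in>\<U>. U `` {x} \<subseteq> A))"

definition finest_uniformity :: "'a topology \<Rightarrow> ('a \<times> 'a) set set \<Rightarrow> bool" where
  "finest_uniformity X \<U> \<longleftrightarrow>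
     compatible_uniformity X \<U> \<and> (\<forall>\<V>. compatible_uniformity X \<V> \<longrightarrow> \<V> \<subseteq> \<U>)"

definition cauchy_filter_in :: "'a topology \<Rightarrow> ('a \<times> 'a) set set \<Rightarrow> 'a filter \<Rightarrow> bool" where
  "cauchy_filter_in X \<U> F \<longleftrightarrow>
     F \<noteq> bot \<and> eventually (\<lambda>x. x \<in> topspace X) F \<and>
     (\<forall>U\<in>\<U>. \<exists>A. eventually (\<lambda>x. x \<in> A) F \<and> A \<times> A \<subseteq> U)"

definition filter_converges_in :: "'a topology \<Rightarrow> 'a filter \<Rightarrow> 'a \<Rightarrow> bool" where
  "filter_converges_in X F x \<longleftrightarrow>
     x \<in> topspace X \<and> (\<forall>N. openin X N \<and> x \<in> N \<longrightarrow> eventually (\<lambda>y. y \<in> N) F)"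

definition complete_uniformity :: "'a topology \<Rightarrow> ('a \<times> 'a) set set \<Rightarrow> bool" where
  "complete_uniformity X \<U> \<longleftrightarrow>
     (\<forall>F. cauchy_filter_in X \<U> F \<longrightarrow> (\<exists>x. filter_converges_in X F x))"

definition topologically_complete :: "'a topology \<Rightarrow> bool" where
  "topologically_complete X \<longleftrightarrow> tychonoff_space X \<and>
     (\<exists>\<U>. finest_uniformity X \<U> \<and> complete_uniformity X \<U>)"

definition clfn_cover :: "'a topology \<Rightarrow> 'a set set \<Rightarrow> bool" where
  "clfn_cover X \<alpha> \<longleftrightarrow>
     (\<forall>V\<in>\<alpha>. closedin X V) \<and> \<Union>\<alpha> = topspace X \<and> locally_finite_in X \<alpha> \<and>
     (\<exists>\<phi>::'a set \<Rightarrow> 'a \<Rightarrow> real.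
        (\<forall>V\<in>\<alpha>. continuous_map X euclideanreal (\<phi> V)) \<and>
        (\<forall>V\<in>\<alpha>. \<forall>x\<in>topspace X. 0 \<le> \<phi> V x \<and> \<phi> V x \<le> 1) \<and>
        (\<forall>V\<in>\<alpha>. X closure_of {x \<in> topspace X. \<phi> V x \<in> {0<..1}} \<subseteq> X interior_of V) \<and>
        (\<forall>x\<in>topspace X. finite {V\<in>\<alpha>. \<phi> V x \<noteq> 0} \<and>
                          (\<Sum>V\<in>{V\<in>\<alpha>. \<phi> V x \<noteq> 0}. \<phi> V x) = 1))"

text \<open>Meet of a vertex \<open>v\<close> over \<open>\<lambda>\<close> (empty intersection means the whole space).\<close>
definition meet :: "'a topology \<Rightarrow> 'a set set set \<Rightarrow> ('a set set \<Rightarrow> 'a set) \<Rightarrow> 'a set" where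
  "meet X lam v = topspace X \<inter> (\<Inter>\<alpha>\<in>lam. v \<alpha>)"

text \<open>Vertex set \<open>N^{(0)}_\<lambda>\<close>; vertices are extensional functions on \<open>\<lambda>\<close>.\<close>
definition vertices :: "'a topology \<Rightarrow> 'a set set set \<Rightarrow> ('a set set \<Rightarrow> 'a set) set" where
  "vertices X lam = {v \<in> (\<Pi>\<^sub>E \<alpha>\<in>lam. \<alpha>). meet X lam v \<noteq> {}}"

text \<open>Abstract simplicial complexes are given by their sets of (finite, nonempty) simplices.\<close>
definition F_complex :: "'a topology \<Rightarrow> 'a set set set \<Rightarrow> ('a set set \<Rightarrow> 'a set) set set" where
  "F_complex X lam = {S. finite S \<and> S \<noteq> {} \<and> S \<subseteq> vertices X lam \<and>
      (\<forall>v\<in>S. \<forall>w\<in>S. meet X lam v \<inter> meet X lam w \<noteq> {})}"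

definition N_complex :: "'a topology \<Rightarrow> 'a set set set \<Rightarrow> ('a set set \<Rightarrow> 'a set) set set" where
  "N_complex X lam = {S. finite S \<and> S \<noteq> {} \<and> S \<subseteq> vertices X lam \<and>
      topspace X \<inter> (\<Inter>v\<in>S. meet X lam v) \<noteq> {}}"

text \<open>The bonding simplicial map \<open>\<pi>^\<mu>_\<lambda>\<close> on vertices: restriction to \<open>\<lambda>\<close>.\<close>
definition bond :: "'a set set set \<Rightarrow> ('a set set \<Rightarrow> 'a set) \<Rightarrow> ('a set set \<Rightarrow> 'a set)" where
  "bond lam v = restrict v lam"

definition simplicial_image :: "('v \<Rightarrow> 'w) \<Rightarrow> 'v set set \<Rightarrow> 'w set set" where
  "simplicial_image f K = (\<lambda>S. f ` S) ` K"

end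

theory Submission
  imports Defs
begin

text \<open>
  Let \<open>L\<close> be the union of the covers in \<open>\<lambda>\<close>, a locally finite family of closed sets. For each
  point \<open>x\<close>, the points all of whose \<open>L\<close>-members contain \<open>x\<close> form an open neighbourhood
  \<open>O\<^sub>x\<close> of \<open>x\<close>. By paracompactness (via partitions of unity) the cover by the \<open>O\<^sub>x\<close> is
  refined by a closed, locally finite, normal cover, hence by some \<open>\<delta> \<in> \<A>\<close>; put
  \<open>\<mu> = \<lambda> \<union> {\<delta>}\<close>. A simplex of \<open>F\<^sub>\<mu>\<close> has a vertex \<open>v\<close> with \<open>v(\<delta>) \<subseteq> O\<^sub>x\<close> for some
  \<open>x\<close>, and every vertex \<open>w\<close> meets \<open>v\<close> in a point of \<open>v(\<delta>)\<close>. So each \<open>w(\<alpha>)\<close>,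
  \<open>\<alpha> \<in> \<lambda>\<close>, contains \<open>x\<close>, and the restricted vertices have the common point \<open>x\<close>: the
  image simplex lies in \<open>N\<^sub>\<lambda>\<close>.
\<close>

section \<open>Paracompact spaces\<close>

lemma paracompact_space_locally_finite_refinement:
  assumes "paracompact_space X" "\<forall>U\<in>\<U>. openin X U" "\<Union>\<U> = topspace X"
  obtains \<V> where "\<forall>V\<in>\<V>. openin X V" "\<Union>\<V> = topspace X" "locally_finite_in X \<V>"
    "refines_cover \<V> \<U>"
proof -
  have "\<forall>\<U>. (\<forall>U\<in>\<U>. openin X U) \<and> \<Union>\<U> = topspace X \<longrightarrow>
        (\<exists>\<V>. (\<forall>V\<in>\<V>. openin X V) \<and> \<Union>\<V> = topspace X \<and>
              locally_finite_in X \<V> \<and> refines_cover \<V> \<U>)"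
    using assms(1) unfolding paracompact_space_def by (rule conjunct2)
  then have "\<exists>\<V>. (\<forall>V\<in>\<V>. openin X V) \<and> \<Union>\<V> = topspace X \<and>
              locally_finite_in X \<V> \<and> refines_cover \<V> \<U>"
    using assms(2,3) by simp
  then show ?thesis
    using that by blast
qed

lemma paracompact_space_separation:
  assumes P: "paracompact_space X" and C: "closedin X C" and D: "D \<subseteq> topspace X"
    and nbhds: "\<And>c. c \<in> C \<Longrightarrow> \<exists>W. openin X W \<and> c \<in> W \<and> disjnt D (X closure_of W)"
  obtains G H where "openin X G" "openin X H" "C \<subseteq> G" "D \<subseteq> H" "disjnt G H"
proof -
  define \<U> where "\<U> = insert (topspace X - C) {W. openin X W \<and> disjnt D (X closure_of W)}"
  have \<U>_open: "\<forall>U\<in>\<U>. openin X U"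
    using C by (auto simp: \<U>_def)
  have "topspace X \<subseteq> \<Union>\<U>"
  proof
    fix x assume "x \<in> topspace X"
    then show "x \<in> \<Union>\<U>"
      using nbhds[of x] by (cases "x \<in> C") (auto simp: \<U>_def)
  qed
  then have \<U>_cover: "\<Union>\<U> = topspace X"
    using \<U>_open openin_subset by blast
  obtain \<V> where \<V>: "\<forall>V\<in>\<V>. openin X V" "\<Union>\<V> = topspace X"
    "locally_finite_in X \<V>" "refines_cover \<V> \<U>"
    using P \<U>_open \<U>_cover by (rule paracompact_space_locally_finite_refinement)
  define G where "G = \<Union>{V \<in> \<V>. V \<inter> C \<noteq> {}}"
  define H where "H = topspace X - X closure_of G"
  have "disjnt D (X closure_of V)" if V: "V \<in> \<V>" "V \<inter> C \<noteq> {}" for V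
  proof -
    obtain U where U: "U \<in> \<U>" "V \<subseteq> U"
      using \<V>(4) V(1) unfolding refines_cover_def by meson
    with V(2) have "U \<noteq> topspace X - C"
      by blast
    with U have "disjnt D (X closure_of U)"
      unfolding \<U>_def by blast
    then show ?thesis
      using closure_of_mono[OF U(2)] disjnt_subset2 by blast
  qed
  moreover have "X closure_of G = (\<Union>V\<in>{V \<in> \<V>. V \<inter> C \<noteq> {}}. X closure_of V)"
    unfolding G_def by (intro closure_of_locally_finite_Union locally_finite_in_subset[OF \<V>(3)]) auto
  ultimately have "D \<subseteq> H"
    using D unfolding H_def disjnt_def by auto
  moreover have "openin X G" "openin X H"
    using \<V>(1) unfolding G_def H_def by auto
  moreover have "C \<subseteq> G"
    using \<V>(2) closedin_subset[OF C] unfolding G_def by blast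
  moreover have "disjnt G H"
    using closure_of_subset[OF openin_subset[OF \<open>openin X G\<close>]] unfolding H_def disjnt_def by blast
  ultimately show ?thesis
    using that by blast
qed

lemma paracompact_imp_regular_space:
  assumes P: "paracompact_space X"
  shows "regular_space X"
  unfolding regular_space_def
proof (intro allI impI)
  fix C a assume "closedin X C \<and> a \<in> topspace X - C"
  then have C: "closedin X C" and a: "a \<in> topspace X" "a \<notin> C" by auto
  have nbhds: "\<exists>W. openin X W \<and> c \<in> W \<and> disjnt {a} (X closure_of W)" if "c \<in> C" for c
  proof -
    have "Hausdorff_space X"
      using P unfolding paracompact_space_def by (rule conjunct1)
    moreover have "c \<noteq> a" "c \<in> topspace X"
      using that a closedin_subset[OF C] by auto
    ultimately obtain U U' where "openin X U" "openin X U'" "c \<in> U" "a \<in> U'" "disjnt U U'"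
      using a unfolding Hausdorff_space_def by blast
    moreover have "U' \<inter> X closure_of U = {}"
      using openin_Int_closure_of_eq_empty[OF \<open>openin X U'\<close>] \<open>disjnt U U'\<close>
      by (simp add: disjnt_def Int_commute)
    ultimately show ?thesis
      by (auto simp: disjnt_def)
  qed
  obtain G H where "openin X G" "openin X H" "C \<subseteq> G" "{a} \<subseteq> H" "disjnt G H"
    using P C _ nbhds by (rule paracompact_space_separation) (use a in simp)
  then show "\<exists>U V. openin X U \<and> openin X V \<and> a \<in> U \<and> C \<subseteq> V \<and> disjnt U V"
    by (meson disjnt_sym insert_subset)
qed

lemma paracompact_imp_normal_space:
  assumes P: "paracompact_space X"
  shows "normal_space X"
  unfolding normal_space_def
proof (intro allI impI)
  fix C D assume "closedin X C \<and> closedin X D \<and> disjnt C D"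
  then have C: "closedin X C" and D: "closedin X D" and "disjnt C D" by auto
  have nbhds: "\<exists>W. openin X W \<and> c \<in> W \<and> disjnt D (X closure_of W)" if "c \<in> C" for c
  proof -
    have "c \<in> topspace X - D"
      using that \<open>disjnt C D\<close> closedin_subset[OF C] by (auto simp: disjnt_def)
    then show ?thesis
      using paracompact_imp_regular_space[OF P] D unfolding regular_space by simp
  qed
  obtain G H where "openin X G" "openin X H" "C \<subseteq> G" "D \<subseteq> H" "disjnt G H"
    using P C closedin_subset[OF D] nbhds by (rule paracompact_space_separation)
  then show "\<exists>U V. openin X U \<and> openin X V \<and> C \<subseteq> U \<and> D \<subseteq> V \<and> disjnt U V"
    by blast
qed

lemma paracompact_space_closure_refinement:
  assumes P: "paracompact_space X"
    and \<U>_open: "\<forall>U\<in>\<U>. openin X U" and \<U>_cover: "\<Union>\<U> = topspace X"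
  obtains \<V> where "\<forall>V\<in>\<V>. openin X V" "\<Union>\<V> = topspace X" "locally_finite_in X \<V>"
    "\<forall>V\<in>\<V>. \<exists>U\<in>\<U>. X closure_of V \<subseteq> U"
proof -
  define \<W> where "\<W> = {W. openin X W \<and> (\<exists>U\<in>\<U>. X closure_of W \<subseteq> U)}"
  have \<W>_open: "\<forall>W\<in>\<W>. openin X W"
    by (simp add: \<W>_def)
  have "topspace X \<subseteq> \<Union>\<W>"
  proof
    fix x assume x: "x \<in> topspace X"
    then obtain U where U: "U \<in> \<U>" "x \<in> U"
      using \<U>_cover by blast
    then have "closedin X (topspace X - U) \<and> x \<in> topspace X - (topspace X - U)"
      using \<U>_open x by blast
    then obtain W where W: "openin X W" "x \<in> W" "disjnt (topspace X - U) (X closure_of W)"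
      using paracompact_imp_regular_space[OF P] unfolding regular_space by metis
    then have "X closure_of W \<subseteq> U"
      using closure_of_subset_topspace[of X W] by (auto simp: disjnt_def)
    then show "x \<in> \<Union>\<W>"
      using W U unfolding \<W>_def by blast
  qed
  then have \<W>_cover: "\<Union>\<W> = topspace X"
    using \<W>_open openin_subset by blast
  obtain \<V> where \<V>: "\<forall>V\<in>\<V>. openin X V" "\<Union>\<V> = topspace X" "locally_finite_in X \<V>"
    "refines_cover \<V> \<W>"
    using P \<W>_open \<W>_cover by (rule paracompact_space_locally_finite_refinement)
  have "\<forall>V\<in>\<V>. \<exists>U\<in>\<U>. X closure_of V \<subseteq> U"
  proof
    fix V assume "V \<in> \<V>"
    then obtain W where "W \<in> \<W>" "V \<subseteq> W"
      using \<V>(4) unfolding refines_cover_def by blast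
    then obtain U where "U \<in> \<U>" "X closure_of W \<subseteq> U"
      unfolding \<W>_def by blast
    with \<open>V \<subseteq> W\<close> show "\<exists>U\<in>\<U>. X closure_of V \<subseteq> U"
      by (meson closure_of_mono order_trans)
  qed
  with \<V>(1-3) show ?thesis
    by (rule that)
qed

lemma paracompact_space_closed_shrinking:
  assumes P: "paracompact_space X"
    and \<V>_open: "\<forall>V\<in>\<V>. openin X V" and \<V>_cover: "\<Union>\<V> = topspace X"
  obtains E where "\<forall>V. closedin X (E V)" "\<forall>V. E V \<subseteq> V"
    "\<forall>x\<in>topspace X. \<exists>V\<in>\<V>. x \<in> E V"
proof -
  obtain \<P> where \<P>: "\<forall>Q\<in>\<P>. openin X Q" "\<Union>\<P> = topspace X" "locally_finite_in X \<P>"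
    "\<forall>Q\<in>\<P>. \<exists>V\<in>\<V>. X closure_of Q \<subseteq> V"
    using P \<V>_open \<V>_cover by (rule paracompact_space_closure_refinement)
  define E where "E V = \<Union>((\<lambda>Q. X closure_of Q) ` {Q \<in> \<P>. X closure_of Q \<subseteq> V})" for V
  have "\<forall>V. closedin X (E V)"
    unfolding E_def
    by (intro allI closedin_Union_locally_finite_closure locally_finite_in_subset[OF \<P>(3)]) auto
  moreover have "\<forall>V. E V \<subseteq> V"
    unfolding E_def by blast
  moreover have "\<forall>x\<in>topspace X. \<exists>V\<in>\<V>. x \<in> E V"
  proof
    fix x assume "x \<in> topspace X"
    then obtain Q where Q: "Q \<in> \<P>" "x \<in> Q"
      using \<P>(2) by blast
    moreover obtain V where "V \<in> \<V>" "X closure_of Q \<subseteq> V"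
      using \<P>(4) Q(1) by blast
    moreover have "x \<in> X closure_of Q"
      using Q \<P>(1) closure_of_subset[OF openin_subset] by blast
    ultimately show "\<exists>V\<in>\<V>. x \<in> E V"
      unfolding E_def by blast
  qed
  ultimately show ?thesis
    by (rule that)
qed

lemma normal_space_Urysohn_bump:
  assumes N: "normal_space X" and E: "closedin X E" and V: "openin X V" and "E \<subseteq> V"
  obtains f where "continuous_map X euclideanreal f" "\<forall>x\<in>topspace X. f x \<in> {0..1}"
    "X closure_of {x \<in> topspace X. f x \<noteq> 0} \<subseteq> V" "\<forall>x\<in>E. f x = 1"
proof -
  obtain G where G: "openin X G" "E \<subseteq> G" "X closure_of G \<subseteq> V"
    using N E V \<open>E \<subseteq> V\<close> unfolding normal_space_alt by metis
  have "disjnt (topspace X - G) E"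
    using G(2) by (auto simp: disjnt_def)
  then obtain f where f: "continuous_map X (top_of_set {0..1::real}) f"
    "f ` (topspace X - G) \<subseteq> {0}" "f ` E \<subseteq> {1}"
    using Urysohn_lemma[OF N closedin_diff[OF closedin_topspace G(1)] E, of 0 1] by auto
  have "{x \<in> topspace X. f x \<noteq> 0} \<subseteq> G"
    using f(2) by blast
  then have "X closure_of {x \<in> topspace X. f x \<noteq> 0} \<subseteq> V"
    using G(3) closure_of_mono by blast
  moreover have "continuous_map X euclideanreal f" "\<forall>x\<in>topspace X. f x \<in> {0..1}"
    using f(1) by (auto simp: continuous_map_in_subtopology)
  moreover have "\<forall>x\<in>E. f x = 1"
    using f(3) by blast
  ultimately show ?thesis
    using that by blast
qed

section \<open>Partitions of unity\<close>

text \<open>Junk value: \<open>0\<close> if infinitely many terms are nonzero.\<close>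
definition support_sum :: "('i \<Rightarrow> 'a \<Rightarrow> real) \<Rightarrow> 'i set \<Rightarrow> 'a \<Rightarrow> real" where
  "support_sum f I x = (\<Sum>i\<in>{i \<in> I. f i x \<noteq> 0}. f i x)"

lemma support_sum_eq_sum:
  assumes "finite F" "{i \<in> I. f i x \<noteq> 0} \<subseteq> F" "F \<subseteq> I"
  shows "support_sum f I x = (\<Sum>i\<in>F. f i x)"
  unfolding support_sum_def using assms by (intro sum.mono_neutral_left) auto

lemma support_sum_nonneg: "(\<And>i. i \<in> I \<Longrightarrow> 0 \<le> f i x) \<Longrightarrow> 0 \<le> support_sum f I x"
  unfolding support_sum_def by (intro sum_nonneg) auto

lemma support_sum_mono:
  assumes "finite {i \<in> I. f i x \<noteq> 0}" "J \<subseteq> I" "\<And>i. i \<in> I \<Longrightarrow> 0 \<le> f i x"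
  shows "support_sum f J x \<le> support_sum f I x"
  unfolding support_sum_def using assms by (intro sum_mono2) auto

lemma member_le_support_sum:
  assumes "finite {i \<in> I. f i x \<noteq> 0}" "i \<in> I" "\<And>i. i \<in> I \<Longrightarrow> 0 \<le> f i x"
  shows "f i x \<le> support_sum f I x"
proof (cases "f i x = 0")
  case True
  then show ?thesis
    using assms(3) by (simp add: support_sum_nonneg)
next
  case False
  then show ?thesis
    unfolding support_sum_def using assms by (intro member_le_sum) auto
qed

lemma support_sum_neq_0D: "support_sum f I x \<noteq> 0 \<Longrightarrow> \<exists>i\<in>I. f i x \<noteq> 0"
  unfolding support_sum_def by (cases "{i \<in> I. f i x \<noteq> 0} = {}") auto

lemma support_sum_group_support_subset:
  "{B \<in> c ` I. support_sum f {i \<in> I. c i = B} x \<noteq> 0} \<subseteq> c ` {i \<in> I. f i x \<noteq> 0}"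
proof
  fix B assume "B \<in> {B \<in> c ` I. support_sum f {i \<in> I. c i = B} x \<noteq> 0}"
  then obtain i where "i \<in> I" "c i = B" "f i x \<noteq> 0"
    by (auto dest: support_sum_neq_0D)
  then show "B \<in> c ` {i \<in> I. f i x \<noteq> 0}"
    by blast
qed

lemma support_sum_group:
  assumes fin: "finite {i \<in> I. f i x \<noteq> 0}"
  shows "support_sum (\<lambda>B. support_sum f {i \<in> I. c i = B}) (c ` I) x = support_sum f I x"
proof -
  let ?F = "{i \<in> I. f i x \<noteq> 0}"
  have inner: "support_sum f {i \<in> I. c i = B} x = (\<Sum>i\<in>{i \<in> ?F. c i = B}. f i x)" for B
    by (rule support_sum_eq_sum) (auto intro: finite_subset[OF _ fin])
  have "support_sum (\<lambda>B. support_sum f {i \<in> I. c i = B}) (c ` I) x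
      = (\<Sum>B\<in>c ` ?F. support_sum f {i \<in> I. c i = B} x)"
    by (rule support_sum_eq_sum) (use fin support_sum_group_support_subset[of c I f x] in auto)
  also have "\<dots> = (\<Sum>B\<in>c ` ?F. \<Sum>i\<in>{i \<in> ?F. c i = B}. f i x)"
    by (simp only: inner)
  also have "\<dots> = (\<Sum>i\<in>?F. f i x)"
    by (rule sum.image_gen[OF fin, symmetric])
  also have "\<dots> = support_sum f I x"
    by (simp add: support_sum_def)
  finally show ?thesis .
qed

lemma support_sum_group_normalized:
  fixes c :: "'i \<Rightarrow> 'b"
  assumes fin: "finite {i \<in> I. f i x \<noteq> 0}" and nz: "support_sum f I x \<noteq> 0"
  defines "g B \<equiv> support_sum f {i \<in> I. c i = B} x / support_sum f I x"
  shows "finite {B \<in> c ` I. g B \<noteq> 0}" "(\<Sum>B\<in>{B \<in> c ` I. g B \<noteq> 0}. g B) = 1"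
proof -
  have support_eq: "{B \<in> c ` I. g B \<noteq> 0} = {B \<in> c ` I. support_sum f {i \<in> I. c i = B} x \<noteq> 0}"
    unfolding g_def using nz by auto
  show "finite {B \<in> c ` I. g B \<noteq> 0}"
    unfolding support_eq using support_sum_group_support_subset[of c I f x] fin
    by (meson finite_imageI finite_subset)
  have "(\<Sum>B\<in>{B \<in> c ` I. g B \<noteq> 0}. g B)
      = support_sum (\<lambda>B. support_sum f {i \<in> I. c i = B}) (c ` I) x / support_sum f I x"
    unfolding support_eq unfolding g_def support_sum_def[of _ "c ` I"]
    by (simp add: sum_divide_distrib)
  also have "\<dots> = 1"
    using nz support_sum_group[of I f x c] fin by simp
  finally show "(\<Sum>B\<in>{B \<in> c ` I. g B \<noteq> 0}. g B) = 1" .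
qed

lemma locally_finite_in_support_nbhd:
  assumes lf: "locally_finite_in X \<V>" and x: "x \<in> topspace X"
    and supp: "\<And>V y. V \<in> \<V> \<Longrightarrow> y \<in> topspace X \<Longrightarrow> f V y \<noteq> 0 \<Longrightarrow> y \<in> V"
  obtains N F where "openin X N" "x \<in> N" "finite F" "F \<subseteq> \<V>"
    "\<forall>y\<in>N. {V \<in> \<V>. f V y \<noteq> 0} \<subseteq> F"
proof -
  obtain N where N: "openin X N" "x \<in> N" "finite {V \<in> \<V>. V \<inter> N \<noteq> {}}"
    using lf x unfolding locally_finite_in_def by blast
  have "\<forall>y\<in>N. {V \<in> \<V>. f V y \<noteq> 0} \<subseteq> {V \<in> \<V>. V \<inter> N \<noteq> {}}"
    using supp openin_subset[OF N(1)] by blast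
  with N show ?thesis
    using that by blast
qed

lemma finite_support_locally_finite_in:
  assumes "locally_finite_in X \<V>" "x \<in> topspace X"
    and "\<And>V y. V \<in> \<V> \<Longrightarrow> y \<in> topspace X \<Longrightarrow> f V y \<noteq> 0 \<Longrightarrow> y \<in> V"
  shows "finite {V \<in> \<V>. f V x \<noteq> 0}"
proof -
  obtain N F where "x \<in> N" "finite F" "\<forall>y\<in>N. {V \<in> \<V>. f V y \<noteq> 0} \<subseteq> F"
    by (rule locally_finite_in_support_nbhd[OF assms])
  then show ?thesis
    by (metis finite_subset)
qed

lemma continuous_map_support_sum:
  assumes lf: "locally_finite_in X \<V>"
    and supp: "\<And>V y. V \<in> \<V> \<Longrightarrow> y \<in> topspace X \<Longrightarrow> f V y \<noteq> 0 \<Longrightarrow> y \<in> V"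
    and cont: "\<And>V. V \<in> \<V> \<Longrightarrow> continuous_map X euclideanreal (f V)"
  shows "continuous_map X euclideanreal (support_sum f \<V>)"
  unfolding continuous_map_atin
proof
  fix x assume x: "x \<in> topspace X"
  obtain N F where N: "openin X N" "x \<in> N" and F: "finite F" "F \<subseteq> \<V>"
    and supp_F: "\<forall>y\<in>N. {V \<in> \<V>. f V y \<noteq> 0} \<subseteq> F"
    by (rule locally_finite_in_support_nbhd[OF lf x supp])
  define g where "g y = (\<Sum>V\<in>F. f V y)" for y
  have "continuous_map X euclideanreal g"
    unfolding g_def using F cont by (intro continuous_map_sum) auto
  then have "limitin euclideanreal g (g x) (atin X x)"
    using x unfolding continuous_map_atin by blast
  moreover have g_eq: "g y = support_sum f \<V> y" if "y \<in> N" for y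
    unfolding g_def using F supp_F that by (intro support_sum_eq_sum[symmetric]) auto
  then have "eventually (\<lambda>y. g y = support_sum f \<V> y) (atin X x)"
    unfolding eventually_atin using N by blast
  ultimately have "limitin euclideanreal (support_sum f \<V>) (g x) (atin X x)"
    by (rule limitin_transform_eventually[rotated])
  then show "limitin euclideanreal (support_sum f \<V>) (support_sum f \<V> x) (atin X x)"
    using g_eq[OF N(2)] by simp
qed

lemma closure_of_support_sum_subset:
  assumes lf: "locally_finite_in X \<V>"
    and supp: "\<And>V. V \<in> \<V> \<Longrightarrow> X closure_of {x \<in> topspace X. f V x \<noteq> 0} \<subseteq> V"
  shows "X closure_of {x \<in> topspace X. support_sum f \<V> x \<noteq> 0} \<subseteq> \<Union>\<V>"
proof -
  define S where "S V = {x \<in> topspace X. f V x \<noteq> 0}" for V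
  have "S V \<subseteq> V" if "V \<in> \<V>" for V
    using supp[OF that] closure_of_subset[of "S V" X] unfolding S_def by blast
  then have lf_S: "locally_finite_in X (S ` \<V>)"
    using lf by (rule locally_finite_in_refinement[rotated])
  have "{x \<in> topspace X. support_sum f \<V> x \<noteq> 0} \<subseteq> \<Union>(S ` \<V>)"
    unfolding S_def by (auto dest: support_sum_neq_0D)
  then have "X closure_of {x \<in> topspace X. support_sum f \<V> x \<noteq> 0} \<subseteq> X closure_of \<Union>(S ` \<V>)"
    by (rule closure_of_mono)
  also have "\<dots> = (\<Union>V\<in>\<V>. X closure_of S V)"
    using closure_of_locally_finite_Union[OF lf_S] by (simp add: image_image)
  also have "\<dots> \<subseteq> \<Union>\<V>"
    using supp unfolding S_def by blast
  finally show ?thesis .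
qed

lemma closure_of_support_sum_subset_interior_of:
  assumes lf: "locally_finite_in X \<V>" and \<V>_open: "\<And>V. V \<in> \<V> \<Longrightarrow> openin X V"
    and supp: "\<And>V. V \<in> \<V> \<Longrightarrow> X closure_of {x \<in> topspace X. f V x \<noteq> 0} \<subseteq> V"
  shows "X closure_of {x \<in> topspace X. support_sum f {V \<in> \<V>. X closure_of V = B} x \<noteq> 0}
    \<subseteq> X interior_of B"
proof -
  have "X closure_of {x \<in> topspace X. support_sum f {V \<in> \<V>. X closure_of V = B} x \<noteq> 0}
      \<subseteq> \<Union>{V \<in> \<V>. X closure_of V = B}"
    by (rule closure_of_support_sum_subset) (use locally_finite_in_subset[OF lf] supp in auto)
  also have "\<dots> \<subseteq> X interior_of B"
  proof (rule Union_least)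
    fix V assume "V \<in> {V \<in> \<V>. X closure_of V = B}"
    then have "openin X V" "X closure_of V = B"
      using \<V>_open by auto
    then show "V \<subseteq> X interior_of B"
      using interior_of_maximal closure_of_subset openin_subset by metis
  qed
  finally show ?thesis .
qed

lemma support_sum_ratio:
  assumes lf: "locally_finite_in X \<V>" and "\<W> \<subseteq> \<V>"
    and supp: "\<And>V y. V \<in> \<V> \<Longrightarrow> y \<in> topspace X \<Longrightarrow> f V y \<noteq> 0 \<Longrightarrow> y \<in> V"
    and cont: "\<And>V. V \<in> \<V> \<Longrightarrow> continuous_map X euclideanreal (f V)"
    and nonneg: "\<And>V x. V \<in> \<V> \<Longrightarrow> x \<in> topspace X \<Longrightarrow> 0 \<le> f V x"
    and pos: "\<And>x. x \<in> topspace X \<Longrightarrow> 0 < support_sum f \<V> x"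
  shows "continuous_map X euclideanreal (\<lambda>x. support_sum f \<W> x / support_sum f \<V> x)"
    and "\<And>x. x \<in> topspace X \<Longrightarrow> support_sum f \<W> x / support_sum f \<V> x \<in> {0..1}"
proof -
  have "continuous_map X euclideanreal (support_sum f \<W>)"
    using locally_finite_in_subset[OF lf \<open>\<W> \<subseteq> \<V>\<close>] \<open>\<W> \<subseteq> \<V>\<close> supp cont
    by (intro continuous_map_support_sum) auto
  moreover have "continuous_map X euclideanreal (support_sum f \<V>)"
    using lf supp cont by (rule continuous_map_support_sum)
  ultimately show "continuous_map X euclideanreal (\<lambda>x. support_sum f \<W> x / support_sum f \<V> x)"
    using pos by (intro continuous_map_real_divide) force+
next
  fix x assume x: "x \<in> topspace X"
  have "0 \<le> support_sum f \<W> x"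
    using \<open>\<W> \<subseteq> \<V>\<close> nonneg x by (intro support_sum_nonneg) auto
  moreover have "support_sum f \<W> x \<le> support_sum f \<V> x"
    using finite_support_locally_finite_in[OF lf x supp] \<open>\<W> \<subseteq> \<V>\<close> nonneg x
    by (intro support_sum_mono) auto
  ultimately show "support_sum f \<W> x / support_sum f \<V> x \<in> {0..1}"
    using pos[OF x] by (simp add: divide_le_eq_1)
qed

lemma closures_partition_of_unity:
  fixes f :: "'a set \<Rightarrow> 'a \<Rightarrow> real"
  assumes lf: "locally_finite_in X \<V>" and \<V>_open: "\<And>V. V \<in> \<V> \<Longrightarrow> openin X V"
    and cont: "\<And>V. V \<in> \<V> \<Longrightarrow> continuous_map X euclideanreal (f V)"
    and nonneg: "\<And>V x. V \<in> \<V> \<Longrightarrow> x \<in> topspace X \<Longrightarrow> 0 \<le> f V x"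
    and supp: "\<And>V. V \<in> \<V> \<Longrightarrow> X closure_of {x \<in> topspace X. f V x \<noteq> 0} \<subseteq> V"
    and pos: "\<And>x. x \<in> topspace X \<Longrightarrow> 0 < support_sum f \<V> x"
  defines "\<beta> \<equiv> (\<lambda>V. X closure_of V) ` \<V>"
  obtains \<phi> :: "'a set \<Rightarrow> 'a \<Rightarrow> real"
  where "\<forall>B\<in>\<beta>. continuous_map X euclideanreal (\<phi> B)"
    "\<forall>B\<in>\<beta>. \<forall>x\<in>topspace X. 0 \<le> \<phi> B x \<and> \<phi> B x \<le> 1"
    "\<forall>B\<in>\<beta>. X closure_of {x \<in> topspace X. \<phi> B x \<in> {0<..1}} \<subseteq> X interior_of B"
    "\<forall>x\<in>topspace X. finite {B \<in> \<beta>. \<phi> B x \<noteq> 0} \<and> (\<Sum>B\<in>{B \<in> \<beta>. \<phi> B x \<noteq> 0}. \<phi> B x) = 1"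
proof -
  \<comment> \<open>distinct members of \<open>\<V>\<close> may have the same closure, so their bumps are added up\<close>
  define \<V>_of where "\<V>_of B = {V \<in> \<V>. X closure_of V = B}" for B
  define \<phi> where "\<phi> B x = support_sum f (\<V>_of B) x / support_sum f \<V> x" for B x
  have supp_in: "x \<in> V" if "V \<in> \<V>" "x \<in> topspace X" "f V x \<noteq> 0" for V x
    using supp[OF that(1)] closure_of_subset[of "{x \<in> topspace X. f V x \<noteq> 0}" X] that(2,3)
    by blast
  have \<V>_of_sub: "\<V>_of B \<subseteq> \<V>" for B
    unfolding \<V>_of_def by blast
  have "\<forall>B\<in>\<beta>. continuous_map X euclideanreal (\<phi> B)"
    unfolding \<phi>_def by (intro ballI support_sum_ratio(1)[OF lf \<V>_of_sub supp_in cont nonneg pos])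
  moreover have "\<forall>B\<in>\<beta>. \<forall>x\<in>topspace X. 0 \<le> \<phi> B x \<and> \<phi> B x \<le> 1"
    using support_sum_ratio(2)[OF lf \<V>_of_sub supp_in cont nonneg pos] unfolding \<phi>_def by simp
  moreover have "\<forall>B\<in>\<beta>. X closure_of {x \<in> topspace X. \<phi> B x \<in> {0<..1}} \<subseteq> X interior_of B"
  proof
    fix B
    have "{x \<in> topspace X. \<phi> B x \<in> {0<..1}} \<subseteq> {x \<in> topspace X. support_sum f (\<V>_of B) x \<noteq> 0}"
      unfolding \<phi>_def by auto
    then show "X closure_of {x \<in> topspace X. \<phi> B x \<in> {0<..1}} \<subseteq> X interior_of B"
      using closure_of_support_sum_subset_interior_of[OF lf \<V>_open supp, of B] closure_of_mono
      unfolding \<V>_of_def by blast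
  qed
  moreover have "\<forall>x\<in>topspace X. finite {B \<in> \<beta>. \<phi> B x \<noteq> 0} \<and> (\<Sum>B\<in>{B \<in> \<beta>. \<phi> B x \<noteq> 0}. \<phi> B x) = 1"
  proof
    fix x assume x: "x \<in> topspace X"
    have fin: "finite {V \<in> \<V>. f V x \<noteq> 0}"
      using lf x supp_in by (rule finite_support_locally_finite_in)
    have nz: "support_sum f \<V> x \<noteq> 0"
      using pos[OF x] by simp
    from support_sum_group_normalized[where c = "\<lambda>V. X closure_of V", OF fin nz]
    show "finite {B \<in> \<beta>. \<phi> B x \<noteq> 0} \<and> (\<Sum>B\<in>{B \<in> \<beta>. \<phi> B x \<noteq> 0}. \<phi> B x) = 1"
      unfolding \<phi>_def \<V>_of_def \<beta>_def by force
  qed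
  ultimately show ?thesis
    by (rule that)
qed

lemma clfn_cover_closures:
  fixes f :: "'a set \<Rightarrow> 'a \<Rightarrow> real"
  assumes lf: "locally_finite_in X \<V>" and \<V>_open: "\<And>V. V \<in> \<V> \<Longrightarrow> openin X V"
    and cont: "\<And>V. V \<in> \<V> \<Longrightarrow> continuous_map X euclideanreal (f V)"
    and nonneg: "\<And>V x. V \<in> \<V> \<Longrightarrow> x \<in> topspace X \<Longrightarrow> 0 \<le> f V x"
    and supp: "\<And>V. V \<in> \<V> \<Longrightarrow> X closure_of {x \<in> topspace X. f V x \<noteq> 0} \<subseteq> V"
    and one: "\<And>x. x \<in> topspace X \<Longrightarrow> \<exists>V\<in>\<V>. f V x = 1"
  shows "clfn_cover X ((\<lambda>V. X closure_of V) ` \<V>)"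
proof -
  have supp_in: "x \<in> V" if "V \<in> \<V>" "x \<in> topspace X" "f V x \<noteq> 0" for V x
    using supp[OF that(1)] closure_of_subset[of "{x \<in> topspace X. f V x \<noteq> 0}" X] that(2,3)
    by blast
  have pos: "0 < support_sum f \<V> x" if x: "x \<in> topspace X" for x
  proof -
    obtain V where "V \<in> \<V>" "f V x = 1"
      using one[OF x] by blast
    moreover have "finite {V \<in> \<V>. f V x \<noteq> 0}"
      using lf x supp_in by (rule finite_support_locally_finite_in)
    ultimately show ?thesis
      using member_le_support_sum[of \<V> f x V] nonneg x by fastforce
  qed
  have "\<Union>((\<lambda>V. X closure_of V) ` \<V>) = topspace X"
  proof
    show "\<Union>((\<lambda>V. X closure_of V) ` \<V>) \<subseteq> topspace X"
      by (simp add: UN_least closure_of_subset_topspace)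
    show "topspace X \<subseteq> \<Union>((\<lambda>V. X closure_of V) ` \<V>)"
    proof
      fix x assume x: "x \<in> topspace X"
      then obtain V where "V \<in> \<V>" "x \<in> V"
        using one supp_in by fastforce
      then show "x \<in> \<Union>((\<lambda>V. X closure_of V) ` \<V>)"
        using closure_of_subset[OF openin_subset[OF \<V>_open]] by blast
    qed
  qed
  moreover obtain \<phi> where "\<forall>B\<in>(\<lambda>V. X closure_of V) ` \<V>. continuous_map X euclideanreal (\<phi> B)"
    "\<forall>B\<in>(\<lambda>V. X closure_of V) ` \<V>. \<forall>x\<in>topspace X. 0 \<le> \<phi> B x \<and> \<phi> B x \<le> 1"
    "\<forall>B\<in>(\<lambda>V. X closure_of V) ` \<V>.
       X closure_of {x \<in> topspace X. \<phi> B x \<in> {0<..1}} \<subseteq> X interior_of B"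
    "\<forall>x\<in>topspace X. finite {B \<in> (\<lambda>V. X closure_of V) ` \<V>. \<phi> B x \<noteq> 0} \<and>
       (\<Sum>B\<in>{B \<in> (\<lambda>V. X closure_of V) ` \<V>. \<phi> B x \<noteq> 0}. \<phi> B x) = 1"
    by (rule closures_partition_of_unity[OF lf \<V>_open cont nonneg supp pos])
  moreover have "locally_finite_in X ((\<lambda>V. X closure_of V) ` \<V>)"
    using lf by (rule locally_finite_in_closure)
  moreover have "\<forall>B\<in>(\<lambda>V. X closure_of V) ` \<V>. closedin X B"
    by simp
  ultimately show ?thesis
    unfolding clfn_cover_def by blast
qed

lemma paracompact_space_clfn_refinement:
  assumes P: "paracompact_space X"
    and \<U>_open: "\<forall>U\<in>\<U>. openin X U" and \<U>_cover: "\<Union>\<U> = topspace X"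
  obtains \<beta> where "clfn_cover X \<beta>" "refines_cover \<beta> \<U>"
proof -
  obtain \<V> where \<V>_open: "\<forall>V\<in>\<V>. openin X V" and \<V>_cover: "\<Union>\<V> = topspace X"
    and lf: "locally_finite_in X \<V>" and \<V>_closure: "\<forall>V\<in>\<V>. \<exists>U\<in>\<U>. X closure_of V \<subseteq> U"
    using P \<U>_open \<U>_cover by (rule paracompact_space_closure_refinement)
  obtain E where E_closed: "\<forall>V. closedin X (E V)" and E_sub: "\<forall>V. E V \<subseteq> V"
    and E_cover: "\<forall>x\<in>topspace X. \<exists>V\<in>\<V>. x \<in> E V"
    using P \<V>_open \<V>_cover by (rule paracompact_space_closed_shrinking)
  have "\<exists>g. continuous_map X euclideanreal g \<and> (\<forall>x\<in>topspace X. g x \<in> {0..1}) \<and>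
      X closure_of {x \<in> topspace X. g x \<noteq> 0} \<subseteq> V \<and> (\<forall>x\<in>E V. g x = 1)" if V: "V \<in> \<V>" for V
  proof -
    obtain g where "continuous_map X euclideanreal g" "\<forall>x\<in>topspace X. g x \<in> {0..1}"
      "X closure_of {x \<in> topspace X. g x \<noteq> 0} \<subseteq> V" "\<forall>x\<in>E V. g x = 1"
      using paracompact_imp_normal_space[OF P] E_closed[rule_format] \<V>_open[rule_format, OF V]
        E_sub[rule_format]
      by (rule normal_space_Urysohn_bump)
    then show ?thesis
      by blast
  qed
  then obtain f where f: "\<And>V. V \<in> \<V> \<Longrightarrow> continuous_map X euclideanreal (f V) \<and>
      (\<forall>x\<in>topspace X. f V x \<in> {0..1}) \<and>
      X closure_of {x \<in> topspace X. f V x \<noteq> 0} \<subseteq> V \<and> (\<forall>x\<in>E V. f V x = 1)"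
    by metis
  have "clfn_cover X ((\<lambda>V. X closure_of V) ` \<V>)"
  proof (rule clfn_cover_closures[OF lf])
    show "\<exists>V\<in>\<V>. f V x = 1" if "x \<in> topspace X" for x
      using E_cover f that by blast
  qed (use \<V>_open f in auto)
  moreover have "refines_cover ((\<lambda>V. X closure_of V) ` \<V>) \<U>"
    using \<V>_closure unfolding refines_cover_def by blast
  ultimately show ?thesis
    by (rule that)
qed

lemma locally_finite_in_Un:
  assumes "locally_finite_in X \<A>" "locally_finite_in X \<B>"
  shows "locally_finite_in X (\<A> \<union> \<B>)"
  unfolding locally_finite_in_def
proof (intro conjI ballI)
  show "\<Union>(\<A> \<union> \<B>) \<subseteq> topspace X"
    using assms unfolding locally_finite_in_def by auto
  fix x assume x: "x \<in> topspace X"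
  obtain N where N: "openin X N" "x \<in> N" "finite {U \<in> \<A>. U \<inter> N \<noteq> {}}"
    using assms(1) x unfolding locally_finite_in_def by blast
  obtain M where M: "openin X M" "x \<in> M" "finite {U \<in> \<B>. U \<inter> M \<noteq> {}}"
    using assms(2) x unfolding locally_finite_in_def by blast
  have "{U \<in> \<A> \<union> \<B>. U \<inter> (N \<inter> M) \<noteq> {}} \<subseteq> {U \<in> \<A>. U \<inter> N \<noteq> {}} \<union> {U \<in> \<B>. U \<inter> M \<noteq> {}}"
    by blast
  then have "finite {U \<in> \<A> \<union> \<B>. U \<inter> (N \<inter> M) \<noteq> {}}"
    using N(3) M(3) by (meson finite_Un finite_subset)
  with N M show "\<exists>V. openin X V \<and> x \<in> V \<and> finite {U \<in> \<A> \<union> \<B>. U \<inter> V \<noteq> {}}"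
    by (intro exI[of _ "N \<inter> M"]) auto
qed

lemma locally_finite_in_Union:
  assumes "finite \<F>" "\<And>\<A>. \<A> \<in> \<F> \<Longrightarrow> locally_finite_in X \<A>"
  shows "locally_finite_in X (\<Union>\<F>)"
  using assms by (induction \<F> rule: finite_induct) (auto intro: locally_finite_in_Un finite_imp_locally_finite_in)

definition membership_nbhd :: "'a topology \<Rightarrow> 'a set set \<Rightarrow> 'a \<Rightarrow> 'a set" where
  "membership_nbhd X \<L> x = {y \<in> topspace X. \<forall>L\<in>\<L>. y \<in> L \<longrightarrow> x \<in> L}"

lemma openin_membership_nbhd:
  assumes "locally_finite_in X \<L>" "\<And>L. L \<in> \<L> \<Longrightarrow> closedin X L"
  shows "openin X (membership_nbhd X \<L> x)"
proof -
  have "closedin X (\<Union>{L \<in> \<L>. x \<notin> L})"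
    using assms by (intro closedin_locally_finite_Union) (auto elim: locally_finite_in_subset)
  moreover have "membership_nbhd X \<L> x = topspace X - \<Union>{L \<in> \<L>. x \<notin> L}"
    unfolding membership_nbhd_def by blast
  ultimately show ?thesis
    by (simp add: openin_diff)
qed

lemma cofinal_refines_membership_nbhds:
  assumes P: "paracompact_space X"
    and cofinal: "\<forall>\<beta>. clfn_cover X \<beta> \<longrightarrow> (\<exists>\<alpha>\<in>\<A>. refines_cover \<alpha> \<beta>)"
    and lf: "locally_finite_in X \<L>" and closed: "\<And>L. L \<in> \<L> \<Longrightarrow> closedin X L"
  obtains \<delta> where "\<delta> \<in> \<A>" "\<forall>B\<in>\<delta>. \<exists>x\<in>topspace X. B \<subseteq> membership_nbhd X \<L> x"
proof -
  let ?\<U> = "membership_nbhd X \<L> ` topspace X"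
  have \<U>_open: "\<forall>U\<in>?\<U>. openin X U"
    using openin_membership_nbhd[OF lf closed] by blast
  have \<U>_cover: "\<Union>?\<U> = topspace X"
    unfolding membership_nbhd_def by blast
  obtain \<beta> where \<beta>: "clfn_cover X \<beta>" "refines_cover \<beta> ?\<U>"
    by (rule paracompact_space_clfn_refinement[OF P \<U>_open \<U>_cover])
  obtain \<delta> where "\<delta> \<in> \<A>" and \<delta>: "refines_cover \<delta> \<beta>"
    using cofinal \<beta>(1) by blast
  have "\<forall>B\<in>\<delta>. \<exists>x\<in>topspace X. B \<subseteq> membership_nbhd X \<L> x"
  proof
    fix B assume "B \<in> \<delta>"
    then obtain B' where "B' \<in> \<beta>" "B \<subseteq> B'"
      using \<delta> unfolding refines_cover_def by blast
    moreover obtain x where "x \<in> topspace X" "B' \<subseteq> membership_nbhd X \<L> x"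
      using \<beta>(2) \<open>B' \<in> \<beta>\<close> unfolding refines_cover_def by blast
    ultimately show "\<exists>x\<in>topspace X. B \<subseteq> membership_nbhd X \<L> x"
      by blast
  qed
  with \<open>\<delta> \<in> \<A>\<close> show ?thesis
    by (rule that)
qed

lemma meet_subset_meet_bond: "lam \<subseteq> mu \<Longrightarrow> meet X mu v \<subseteq> meet X lam (bond lam v)"
  unfolding meet_def bond_def by auto

lemma bond_in_vertices:
  assumes "lam \<subseteq> mu" "v \<in> vertices X mu"
  shows "bond lam v \<in> vertices X lam"
  using assms meet_subset_meet_bond[OF assms(1), of X v]
  unfolding vertices_def bond_def by auto

lemma simplicial_image_bond_F_complex_subset_N_complex:
  assumes "lam \<subseteq> mu" "\<delta> \<in> mu"
    and \<delta>: "\<forall>B\<in>\<delta>. \<exists>x\<in>topspace X. B \<subseteq> membership_nbhd X (\<Union>lam) x"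
  shows "simplicial_image (bond lam) (F_complex X mu) \<subseteq> N_complex X lam"
proof
  fix T assume "T \<in> simplicial_image (bond lam) (F_complex X mu)"
  then obtain S where S: "S \<in> F_complex X mu" and T: "T = bond lam ` S"
    unfolding simplicial_image_def by blast
  then have S_vert: "S \<subseteq> vertices X mu" and S_ne: "S \<noteq> {}" and S_fin: "finite S"
    and S_meets: "\<forall>v\<in>S. \<forall>w\<in>S. meet X mu v \<inter> meet X mu w \<noteq> {}"
    unfolding F_complex_def by auto
  obtain v where v: "v \<in> S"
    using S_ne by blast
  then have "v \<delta> \<in> \<delta>"
    using S_vert \<open>\<delta> \<in> mu\<close> unfolding vertices_def by auto
  then obtain x where x: "x \<in> topspace X" "v \<delta> \<subseteq> membership_nbhd X (\<Union>lam) x"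
    using \<delta> by blast
  have "x \<in> meet X lam (bond lam w)" if w: "w \<in> S" for w
  proof -
    obtain y where y: "y \<in> meet X mu v" "y \<in> meet X mu w"
      using S_meets v w by blast
    then have "y \<in> membership_nbhd X (\<Union>lam) x"
      using x(2) \<open>\<delta> \<in> mu\<close> unfolding meet_def by blast
    moreover have "w \<in> (\<Pi>\<^sub>E \<alpha>\<in>mu. \<alpha>)"
      using S_vert w unfolding vertices_def by blast
    then have "w \<alpha> \<in> \<Union>lam \<and> y \<in> w \<alpha>" if "\<alpha> \<in> lam" for \<alpha>
      using y(2) that \<open>lam \<subseteq> mu\<close> unfolding meet_def by auto
    ultimately show ?thesis
      using x(1) unfolding membership_nbhd_def meet_def bond_def by auto
  qed
  then have "x \<in> topspace X \<inter> (\<Inter>u\<in>T. meet X lam u)"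
    using x(1) T by blast
  moreover have "T \<subseteq> vertices X lam"
    using T S_vert bond_in_vertices[OF \<open>lam \<subseteq> mu\<close>] by blast
  ultimately show "T \<in> N_complex X lam"
    unfolding N_complex_def using T S_ne S_fin by blast
qed

theorem theorem2p6:
  fixes X :: "'a topology" and \<A> :: "'a set set set"
  assumes "paracompact_space X"
    and "topologically_complete X"
    and "\<forall>\<alpha>\<in>\<A>. clfn_cover X \<alpha>"
    and "\<forall>\<beta>. clfn_cover X \<beta> \<longrightarrow> (\<exists>\<alpha>\<in>\<A>. refines_cover \<alpha> \<beta>)"
  shows "\<forall>lam. finite lam \<and> lam \<subseteq> \<A> \<longrightarrow>
           (\<exists>mu. finite mu \<and> mu \<subseteq> \<A> \<and> lam \<subseteq> mu \<and>
                simplicial_image (bond lam) (F_complex X mu) \<subseteq> N_complex X lam)"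
proof (intro allI impI)
  fix lam assume lam: "finite lam \<and> lam \<subseteq> \<A>"
  then have lam_clfn: "\<And>\<alpha>. \<alpha> \<in> lam \<Longrightarrow> clfn_cover X \<alpha>"
    using assms(3) by blast
  have "locally_finite_in X (\<Union>lam)"
    using lam lam_clfn by (intro locally_finite_in_Union) (auto simp: clfn_cover_def)
  moreover have "\<And>L. L \<in> \<Union>lam \<Longrightarrow> closedin X L"
    using lam_clfn unfolding clfn_cover_def by blast
  ultimately obtain \<delta> where "\<delta> \<in> \<A>"
    and \<delta>: "\<forall>B\<in>\<delta>. \<exists>x\<in>topspace X. B \<subseteq> membership_nbhd X (\<Union>lam) x"
    using cofinal_refines_membership_nbhds[OF assms(1,4)] by metis
  then have "simplicial_image (bond lam) (F_complex X (insert \<delta> lam)) \<subseteq> N_complex X lam"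
    by (intro simplicial_image_bond_F_complex_subset_N_complex) auto
  then show "\<exists>mu. finite mu \<and> mu \<subseteq> \<A> \<and> lam \<subseteq> mu \<and>
      simplicial_image (bond lam) (F_complex X mu) \<subseteq> N_complex X lam"
    using lam \<open>\<delta> \<in> \<A>\<close> by (intro exI[of _ "insert \<delta> lam"]) auto
qed

end
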